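(* Let $v$ be as defined below, and on the arc $\Gamma_1=\{Q=1,\ x_0>1,\ \theta=0\}$ (parametrised by $x_0\in(1,\infty)$) regard $f=p^6/18$ as a function of $v\in(0,\infty)$. Then $f''(v)>0$, i.e. $f$ is strictly convex as a function of $v$; indeed $f'(v)=H/v$ and $\frac{d}{dx_0}(H/v)=\frac{p^2}{v}(p^2-x_0)>0$.
   Context: On $\mathbb R^3$: $r^2=x_1^2+x_2^2$, $Q=x_0^2-\tfrac12r^2$, $H=x_0r^2$, $p=(4x_0^2+r^2)^{1/4}$. On the arc with $Q=1$, $x_0>1$, we have $r^2=2(x_0^2-1)$. $v\colon(1,\infty)\to(0,\infty)$ is a positive solution of $\frac{dv}{dx_0}=\frac{\sqrt{3x_0^2-1}}{\sqrt2(x_0^2-1)}v$, extended by $v(1)=0$ (so $v$ is increasing with $\frac{dv}{dx_0}=\frac{p^2}{r^2}v$). *)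

theory Defs
  imports "HOL-Analysis.Analysis"
begin

text \<open>Functions on R^3 expressed through x0 and r^2 = x1^2 + x2^2.\<close>
definition Qf :: "real \<Rightarrow> real \<Rightarrow> real" where "Qf x0 r2 = x0^2 - r2 / 2"
definition Hf :: "real \<Rightarrow> real \<Rightarrow> real" where "Hf x0 r2 = x0 * r2"
definition pf :: "real \<Rightarrow> real \<Rightarrow> real" where "pf x0 r2 = (4 * x0^2 + r2) powr (1/4)"

text \<open>On the arc Gamma_1 = {Q = 1, x0 > 1, theta = 0}: r^2 = 2(x0^2 - 1).\<close>
definition arc_r2 :: "real \<Rightarrow> real" where "arc_r2 x0 = 2 * (x0^2 - 1)"
definition arc_H :: "real \<Rightarrow> real" where "arc_H x0 = Hf x0 (arc_r2 x0)"
definition arc_p :: "real \<Rightarrow> real" where "arc_p x0 = pf x0 (arc_r2 x0)"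
definition arc_f :: "real \<Rightarrow> real" where "arc_f x0 = arc_p x0 ^ 6 / 18"

end

(* Along the arc p^4 = 6 x0^2 - 2, H = x0 r^2 and v'/v = p^2/r^2, so df/dx0 = x0 p^2 = (v'/v) H.
   Hence df/dv = H/v by the inverse function rule, and
   d(H/v)/dx0 = (H' - (v'/v) H)/v = (p^4 - x0 p^2)/v, which is positive since p^2 >= x0 + 1.
   That v maps (1, infinity) onto (0, infinity) follows by comparing v'/v with the logarithmic
   derivatives of sqrt (x0 - 1) near 1 and of x0 near infinity: v <= C sqrt (x0 - 1) and v >= c x0. *)

theory Submission
  imports Defs
begin

lemma ratio_le_of_log_deriv_le:
  fixes v w g h :: "real \<Rightarrow> real"
  assumes "a \<le> b"
    and v_deriv: "\<And>y. y \<in> {a..b} \<Longrightarrow> (v has_real_derivative g y * v y) (at y)"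
    and w_deriv: "\<And>y. y \<in> {a..b} \<Longrightarrow> (w has_real_derivative h y * w y) (at y)"
    and h_le_g: "\<And>y. y \<in> {a..b} \<Longrightarrow> h y \<le> g y"
    and v_nonneg: "\<And>y. y \<in> {a..b} \<Longrightarrow> 0 \<le> v y"
    and w_pos: "\<And>y. y \<in> {a..b} \<Longrightarrow> 0 < w y"
  shows "v a / w a \<le> v b / w b"
proof -
  have deriv: "((\<lambda>y. v y / w y) has_real_derivative v y * (g y - h y) / w y) (at y)"
    if "y \<in> {a..b}" for y
  proof -
    have "((\<lambda>y. v y / w y) has_real_derivative
        (g y * v y * w y - v y * (h y * w y)) / (w y * w y)) (at y)"
      using that w_pos[OF that] by (auto intro!: DERIV_divide v_deriv w_deriv)
    moreover have "(g y * v y * w y - v y * (h y * w y)) / (w y * w y) = v y * (g y - h y) / w y"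
      using w_pos[OF that] by (simp add: field_simps)
    ultimately show ?thesis by simp
  qed
  show ?thesis
  proof (rule DERIV_nonneg_imp_increasing_open[OF \<open>a \<le> b\<close>])
    fix y assume "a < y" "y < b"
    then have "y \<in> {a..b}" by simp
    then show "\<exists>D. ((\<lambda>y. v y / w y) has_real_derivative D) (at y) \<and> 0 \<le> D"
      using deriv v_nonneg h_le_g w_pos by (fastforce intro!: divide_nonneg_pos mult_nonneg_nonneg)
  next
    show "continuous_on {a..b} (\<lambda>y. v y / w y)"
      by (rule DERIV_atLeastAtMost_imp_continuous_on) (use deriv in auto)
  qed
qed

lemma connected_image_eq_greaterThan_0:
  fixes v :: "real \<Rightarrow> real"
  assumes "connected S" "continuous_on S v"
    and pos: "\<And>x. x \<in> S \<Longrightarrow> 0 < v x"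
    and small: "\<And>e. 0 < e \<Longrightarrow> \<exists>x\<in>S. v x \<le> e"
    and large: "\<And>M. \<exists>x\<in>S. M \<le> v x"
  shows "v ` S = {0<..}"
proof
  show "v ` S \<subseteq> {0<..}"
    using pos by auto
  have "connected (v ` S)"
    using assms(1,2) by (rule connected_continuous_image[rotated])
  then have interval: "\<And>a b y. a \<in> v ` S \<Longrightarrow> b \<in> v ` S \<Longrightarrow> a \<le> y \<Longrightarrow> y \<le> b \<Longrightarrow> y \<in> v ` S"
    unfolding connected_iff_interval by blast
  show "{0<..} \<subseteq> v ` S"
  proof
    fix y :: real assume "y \<in> {0<..}"
    then obtain a where "a \<in> S" "v a \<le> y"
      using small by auto
    moreover obtain b where "b \<in> S" "y \<le> v b"
      using large by blast
    ultimately show "y \<in> v ` S"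
      by (blast intro: interval)
  qed
qed

lemma arc_H_eq: "arc_H x = 2 * x^3 - 2 * x"
  unfolding arc_H_def Hf_def arc_r2_def by (simp add: power2_eq_square power3_eq_cube algebra_simps)

lemma arc_p_pow4:
  assumes "1 < x"
  shows "arc_p x ^ 4 = 6 * x^2 - 2"
proof -
  have "1 < x^2"
    using assms by simp
  moreover have "arc_p x = (6 * x^2 - 2) powr (1/4)"
    unfolding arc_p_def pf_def arc_r2_def by (simp add: algebra_simps)
  ultimately show ?thesis
    by (simp add: powr_power)
qed

lemma arc_p_sq:
  assumes "1 < x"
  shows "arc_p x ^ 2 = sqrt (6 * x^2 - 2)"
proof (rule real_sqrt_unique[symmetric])
  show "(arc_p x ^ 2)\<^sup>2 = 6 * x^2 - 2"
    using arc_p_pow4[OF assms] by simp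
qed simp

lemma arc_p_sq_ge:
  assumes "1 < x"
  shows "x + 1 \<le> arc_p x ^ 2"
proof -
  have "0 \<le> (x - 1) * (5 * x + 3)"
    using assms by simp
  then have "(x + 1)^2 \<le> 6 * x^2 - 2"
    by (simp add: power2_eq_square algebra_simps)
  then show ?thesis
    unfolding arc_p_sq[OF assms] by (rule real_le_rsqrt)
qed

lemma arc_f_deriv:
  assumes "1 < x"
  shows "(arc_f has_real_derivative x * arc_p x ^ 2) (at x)"
proof -
  have arc_f_eq: "arc_f y = sqrt (6 * y^2 - 2) ^ 3 / 18" if "1 < y" for y
  proof -
    have "arc_p y ^ 6 = (arc_p y ^ 2) ^ 3" by simp
    then show ?thesis
      using that by (simp add: arc_f_def arc_p_sq)
  qed
  have "1 < x^2"
    using assms by simp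
  then have "((\<lambda>y. sqrt (6 * y^2 - 2) ^ 3 / 18) has_real_derivative x * sqrt (6 * x^2 - 2)) (at x)"
    by (auto intro!: derivative_eq_intros simp: power2_eq_square field_simps)
  then have "(arc_f has_real_derivative x * sqrt (6 * x^2 - 2)) (at x)"
    by (rule has_field_derivative_transform_within_open[where S = "{1<..}"])
       (use assms arc_f_eq in auto)
  then show ?thesis
    using arc_p_sq[OF assms] by simp
qed

definition arc_rate :: "real \<Rightarrow> real" where
  "arc_rate x = arc_p x ^ 2 / arc_r2 x"

lemma arc_rate_eq:
  assumes "1 < x"
  shows "arc_rate x = sqrt (6 * x^2 - 2) / (2 * (x^2 - 1))"
  using assms by (simp add: arc_rate_def arc_r2_def arc_p_sq)

lemma ode_coeff_eq_arc_rate: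
  assumes "1 < x"
  shows "sqrt (3 * x^2 - 1) / (sqrt 2 * (x^2 - 1)) = arc_rate x"
proof -
  have "sqrt (6 * x^2 - 2) = sqrt 2 * sqrt (3 * x^2 - 1)"
    by (simp add: real_sqrt_mult[symmetric] algebra_simps)
  then have "arc_rate x = (sqrt 2 * sqrt (3 * x^2 - 1)) / (sqrt 2 * (sqrt 2 * (x^2 - 1)))"
    using assms by (simp add: arc_rate_eq mult.assoc[symmetric])
  also have "\<dots> = sqrt (3 * x^2 - 1) / (sqrt 2 * (x^2 - 1))"
    by (rule mult_divide_mult_cancel_left) simp
  finally show ?thesis ..
qed

lemma arc_r2_pos:
  assumes "1 < x"
  shows "0 < arc_r2 x"
  using assms by (simp add: arc_r2_def)

lemma arc_rate_pos:
  assumes "1 < x"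
  shows "0 < arc_rate x"
proof -
  have "0 < arc_p x ^ 2"
    using assms arc_p_sq_ge[OF assms] by linarith
  then show ?thesis
    using arc_r2_pos[OF assms] by (simp add: arc_rate_def)
qed

lemma arc_rate_mult_arc_H:
  assumes "1 < x"
  shows "arc_rate x * arc_H x = x * arc_p x ^ 2"
  using arc_r2_pos[OF assms] by (simp add: arc_rate_def arc_H_def Hf_def)

lemma arc_rate_ge_near_1:
  assumes "1 < x"
  shows "1 / (2 * (x - 1)) \<le> arc_rate x"
proof -
  have "1 \<le> arc_p x ^ 2 / (x + 1)"
    using assms arc_p_sq_ge[OF assms] by simp
  then have "1 / (2 * (x - 1)) \<le> arc_p x ^ 2 / (x + 1) / (2 * (x - 1))"
    by (rule divide_right_mono) (use assms in simp)
  also have "\<dots> = arc_rate x"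
    using assms by (simp add: arc_rate_def arc_r2_def power2_eq_square field_simps)
  finally show ?thesis .
qed

lemma arc_rate_ge_inverse:
  assumes "1 < x"
  shows "1 / x \<le> arc_rate x"
proof -
  have "1 < x^2" "0 \<le> x^4"
    using assms by simp_all
  then have "(2 * (x^2 - 1))^2 \<le> x^2 * (6 * x^2 - 2)"
    by (simp add: power2_eq_square power4_eq_xxxx algebra_simps)
  also have "\<dots> = (x * arc_p x ^ 2)^2"
    using arc_p_pow4[OF assms] by (simp add: power_mult_distrib flip: power_mult)
  finally have "arc_r2 x \<le> x * arc_p x ^ 2"
    unfolding arc_r2_def by (rule power2_le_imp_le) (use assms in simp)
  then show ?thesis
    using assms arc_r2_pos[OF assms] by (simp add: arc_rate_def field_simps)
qed

lemma arc_H_deriv: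
  assumes "1 < x"
  shows "(arc_H has_real_derivative arc_p x ^ 4) (at x)"
proof -
  have "((\<lambda>y. 2 * y^3 - 2 * y) has_real_derivative 6 * x^2 - 2) (at x)"
    by (auto intro!: derivative_eq_intros)
  then show ?thesis
    using assms by (simp add: arc_H_eq[abs_def] arc_p_pow4)
qed

locale arc_solution =
  fixes v :: "real \<Rightarrow> real"
  assumes v_pos: "1 < x \<Longrightarrow> 0 < v x"
    and v_deriv: "1 < x \<Longrightarrow> (v has_real_derivative arc_rate x * v x) (at x)"
begin

abbreviation v_inv :: "real \<Rightarrow> real" where
  "v_inv \<equiv> the_inv_into {1<..} v"

lemma continuous_on_v: "continuous_on {1<..} v"
  using v_deriv by (intro continuous_at_imp_continuous_on) (auto intro: DERIV_isCont)

lemma strict_mono_on_v: "strict_mono_on {1<..} v"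
proof (rule strict_mono_onI)
  fix a b :: real
  assume "a \<in> {1<..}" "a < b"
  show "v a < v b"
  proof (rule DERIV_pos_imp_increasing[OF \<open>a < b\<close>])
    fix y assume "a \<le> y"
    with \<open>a \<in> {1<..}\<close> have "1 < y" by simp
    then show "\<exists>D. (v has_real_derivative D) (at y) \<and> 0 < D"
      using v_deriv arc_rate_pos v_pos by (blast intro: mult_pos_pos)
  qed
qed

lemma inj_on_v: "inj_on v {1<..}"
  using strict_mono_on_v by (rule strict_mono_on_imp_inj_on)

lemma v_le_near_1:
  assumes "1 < x" "x \<le> 2"
  shows "v x \<le> v 2 * sqrt (x - 1)"
proof -
  have "v x / sqrt (x - 1) \<le> v 2 / sqrt (2 - 1)"
  proof (rule ratio_le_of_log_deriv_le[where g = arc_rate and h = "\<lambda>y. 1 / (2 * (y - 1))"])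
    fix y assume "y \<in> {x..2}"
    then have y: "1 < y"
      using assms by simp
    show "(v has_real_derivative arc_rate y * v y) (at y)"
      using y by (rule v_deriv)
    have "sqrt (y - 1) * sqrt (y - 1) = y - 1"
      using y by simp
    then show "((\<lambda>y. sqrt (y - 1)) has_real_derivative 1 / (2 * (y - 1)) * sqrt (y - 1)) (at y)"
      using y by (auto intro!: derivative_eq_intros simp: field_simps)
    show "1 / (2 * (y - 1)) \<le> arc_rate y"
      using y by (rule arc_rate_ge_near_1)
    show "0 \<le> v y"
      using v_pos[OF y] by simp
    show "0 < sqrt (y - 1)"
      using y by simp
  qed (use assms in simp)
  then show ?thesis
    using assms by (simp add: divide_le_eq)
qed

lemma v_ge_at_top:
  assumes "2 \<le> x"
  shows "v 2 / 2 * x \<le> v x"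
proof -
  have "v 2 / 2 \<le> v x / x"
  proof (rule ratio_le_of_log_deriv_le[where g = arc_rate and h = "\<lambda>y. 1 / y"])
    fix y assume "y \<in> {2..x}"
    then have y: "1 < y"
      by simp
    show "(v has_real_derivative arc_rate y * v y) (at y)"
      using y by (rule v_deriv)
    show "((\<lambda>y. y) has_real_derivative 1 / y * y) (at y)"
      using y by (auto intro!: derivative_eq_intros)
    show "1 / y \<le> arc_rate y"
      using y by (rule arc_rate_ge_inverse)
    show "0 \<le> v y"
      using v_pos[OF y] by simp
    show "0 < y"
      using y by simp
  qed (use assms in simp)
  then show ?thesis
    using assms by (simp add: le_divide_eq mult.commute)
qed

lemma v_image: "v ` {1<..} = {0<..}"
proof (rule connected_image_eq_greaterThan_0)
  have v2: "0 < v 2"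
    by (rule v_pos) simp
  fix e :: real
  assume "0 < e"
  define x where "x = 1 + min 1 ((e / v 2)^2)"
  have x: "1 < x" "x \<le> 2"
    using \<open>0 < e\<close> v2 by (auto simp: x_def)
  have "v x \<le> v 2 * sqrt (x - 1)"
    using x by (rule v_le_near_1)
  also have "\<dots> \<le> v 2 * sqrt ((e / v 2)^2)"
    using v2 by (intro mult_left_mono real_sqrt_le_mono) (auto simp: x_def)
  also have "\<dots> = e"
    using \<open>0 < e\<close> v2 by simp
  finally show "\<exists>x\<in>{1<..}. v x \<le> e"
    using x by auto
next
  have v2: "0 < v 2"
    by (rule v_pos) simp
  fix M :: real
  define x where "x = max 2 (2 * M / v 2)"
  have "M = v 2 / 2 * (2 * M / v 2)"
    using v2 by simp
  also have "\<dots> \<le> v 2 / 2 * x"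
    using v2 by (intro mult_left_mono) (auto simp: x_def)
  also have "\<dots> \<le> v x"
    by (rule v_ge_at_top) (simp add: x_def)
  finally show "\<exists>x\<in>{1<..}. M \<le> v x"
    by (intro bexI[of _ x]) (auto simp: x_def)
qed (use continuous_on_v v_pos in auto)

lemma v_inv_v: "1 < x \<Longrightarrow> v_inv (v x) = x"
  by (simp add: inj_on_v the_inv_into_f_f)

lemma v_v_inv: "0 < w \<Longrightarrow> v (v_inv w) = w"
  using f_the_inv_into_f[OF inj_on_v, of w] v_image by simp

lemma v_inv_deriv:
  assumes "1 < x"
  shows "(v_inv has_real_derivative inverse (arc_rate x * v x)) (at (v x))"
  unfolding has_field_derivative_def
proof (rule has_derivative_inverse_strong[where S = "{1<..}" and f = v and x = x])
  show "(v has_derivative (*) (arc_rate x * v x)) (at x)"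
    using v_deriv[OF assms] by (simp add: has_field_derivative_def)
  have "arc_rate x * v x \<noteq> 0"
    using arc_rate_pos[OF assms] v_pos[OF assms] by simp
  then show "(*) (arc_rate x * v x) \<circ> (*) (inverse (arc_rate x * v x)) = id"
    by (auto simp: fun_eq_iff field_simps)
qed (use assms continuous_on_v v_inv_v in auto)

lemma arc_f_v_inv_deriv:
  assumes "1 < x"
  shows "((\<lambda>w. arc_f (v_inv w)) has_real_derivative arc_H x / v x) (at (v x))"
proof -
  have "(arc_f has_real_derivative x * arc_p x ^ 2) (at (v_inv (v x)))"
    using arc_f_deriv[OF assms] by (simp add: v_inv_v[OF assms])
  from DERIV_chain2[OF this v_inv_deriv[OF assms]]
  have "((\<lambda>w. arc_f (v_inv w)) has_real_derivative
      x * arc_p x ^ 2 * inverse (arc_rate x * v x)) (at (v x))" .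
  also have "x * arc_p x ^ 2 * inverse (arc_rate x * v x) = arc_rate x * arc_H x / (arc_rate x * v x)"
    by (simp add: arc_rate_mult_arc_H[OF assms] divide_inverse)
  also have "\<dots> = arc_H x / v x"
    using arc_rate_pos[OF assms] by simp
  finally show ?thesis .
qed

lemma arc_H_div_v_deriv:
  assumes "1 < x"
  shows "((\<lambda>y. arc_H y / v y) has_real_derivative arc_p x ^ 2 / v x * (arc_p x ^ 2 - x)) (at x)"
proof -
  have "((\<lambda>y. arc_H y / v y) has_real_derivative
      (arc_p x ^ 4 * v x - arc_H x * (arc_rate x * v x)) / (v x * v x)) (at x)"
    using v_pos[OF assms] by (intro DERIV_divide arc_H_deriv v_deriv assms) simp
  also have "(arc_p x ^ 4 * v x - arc_H x * (arc_rate x * v x)) / (v x * v x)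
      = (arc_p x ^ 4 - arc_rate x * arc_H x) / v x"
    using v_pos[OF assms] by (simp add: field_simps)
  also have "\<dots> = (arc_p x ^ 4 - x * arc_p x ^ 2) / v x"
    by (simp only: arc_rate_mult_arc_H[OF assms])
  also have "\<dots> = arc_p x ^ 2 / v x * (arc_p x ^ 2 - x)"
    by (simp add: power4_eq_xxxx power2_eq_square field_simps)
  finally show ?thesis .
qed

lemma arc_H_div_v_deriv_pos:
  assumes "1 < x"
  shows "0 < arc_p x ^ 2 / v x * (arc_p x ^ 2 - x)"
proof -
  have "0 < arc_p x ^ 2" "0 < arc_p x ^ 2 - x"
    using arc_p_sq_ge[OF assms] assms by linarith+
  then show ?thesis
    using v_pos[OF assms] by simp
qed

lemma arc_H_div_v_inv_deriv:
  assumes "1 < x"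
  shows "((\<lambda>w. arc_H (v_inv w) / w) has_real_derivative
      arc_p x ^ 2 / v x * (arc_p x ^ 2 - x) * inverse (arc_rate x * v x)) (at (v x))"
proof -
  have "((\<lambda>y. arc_H y / v y) has_real_derivative arc_p x ^ 2 / v x * (arc_p x ^ 2 - x))
      (at (v_inv (v x)))"
    using arc_H_div_v_deriv[OF assms] by (simp add: v_inv_v[OF assms])
  from DERIV_chain2[OF this v_inv_deriv[OF assms]]
  have "((\<lambda>w. arc_H (v_inv w) / v (v_inv w)) has_real_derivative
      arc_p x ^ 2 / v x * (arc_p x ^ 2 - x) * inverse (arc_rate x * v x)) (at (v x))" .
  then show ?thesis
    by (rule has_field_derivative_transform_within_open[where S = "{0<..}"])
       (use assms v_pos v_v_inv in auto)
qed

end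

theorem mainTheorem9:
  fixes v :: "real \<Rightarrow> real"
  assumes pos: "\<forall>x>1. v x > 0"
    and ode: "\<forall>x>1. (v has_real_derivative
               (sqrt (3 * x^2 - 1) / (sqrt 2 * (x^2 - 1)) * v x)) (at x)"
    and v1: "v 1 = 0"
  shows "v ` {1<..} = {0<..} \<and>
    (\<forall>x>1.
      ((\<lambda>w. arc_f (the_inv_into {1<..} v w)) has_real_derivative (arc_H x / v x)) (at (v x)) \<and>
      (\<exists>D>0. ((\<lambda>w. arc_H (the_inv_into {1<..} v w) / w) has_real_derivative D) (at (v x)))) \<and>
    (\<forall>x>1.
      ((\<lambda>y. arc_H y / v y) has_real_derivative
         (arc_p x ^ 2 / v x * (arc_p x ^ 2 - x))) (at x) \<and>
      arc_p x ^ 2 / v x * (arc_p x ^ 2 - x) > 0)"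
proof -
  interpret arc_solution v
  proof
    fix x :: real
    assume "1 < x"
    then show "0 < v x"
      using pos by blast
    show "(v has_real_derivative arc_rate x * v x) (at x)"
      using ode \<open>1 < x\<close> ode_coeff_eq_arc_rate[OF \<open>1 < x\<close>] by metis
  qed
  have "0 < arc_p x ^ 2 / v x * (arc_p x ^ 2 - x) * inverse (arc_rate x * v x)" if "1 < x" for x
    using arc_rate_pos[OF that] v_pos[OF that]
    by (intro mult_pos_pos arc_H_div_v_deriv_pos that) simp_all
  then show ?thesis
    using v_image arc_f_v_inv_deriv arc_H_div_v_inv_deriv arc_H_div_v_deriv arc_H_div_v_deriv_pos
    by blast
qed

end
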